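(* Let $Q(x,u,v,y;\alpha,\beta)$ be affine-linear in each of $x,u,v,y$ and satisfy $Q(x,u,v,y;\alpha,\beta)=\varepsilon Q(x,v,u,y;\beta,\alpha)=\sigma Q(u,x,y,v;\alpha,\beta)$ with $\varepsilon,\sigma\in\{\pm1\}$. Define $g(x,u;\alpha,\beta)=QQ_{yv}-Q_yQ_v$ (evaluated at $Q=Q(x,u,v,y;\alpha,\beta)$; it is a biquadratic polynomial in $x,u$ independent of $v,y$). Then also $g(x,v;\beta,\alpha)=QQ_{yu}-Q_yQ_u$, and $g(x,u;\alpha,\beta)=g(u,x;\alpha,\beta)$. Moreover, let $f_1,f_2,f_3$ be defined by: $x_{23}=f_1(x,x_2,x_3)$ is the solution of $Q(x,x_2,x_3,x_{23};\alpha_2,\alpha_3)=0$, $x_{31}=f_2(x,x_3,x_1)$ the solution of $Q(x,x_3,x_1,x_{31};\alpha_3,\alpha_1)=0$, $x_{12}=f_3(x,x_1,x_2)$ the solution of $Q(x,x_1,x_2,x_{12};\alpha_1,\alpha_2)=0$. Then the identity $f_{3,x_2}f_{2,x_1}f_{1,x_3}=-f_{3,x_1}f_{2,x_3}f_{1,x_2}$ (notation as in the context) is equivalent to the identity $$g(x,x_1;\alpha_1,\alpha_2)g(x,x_2;\alpha_2,\alpha_3)g(x,x_3;\alpha_3,\alpha_1)=-g(x,x_1;\alpha_1,\alpha_3)g(x,x_2;\alpha_2,\alpha_1)g(x,x_3;\alpha_3,\alpha_2).$$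
   Context: $Q_y$, $Q_{yv}$ etc. denote partial derivatives of $Q$ with respect to the indicated variables. $f_{3,x_j}$ denotes the partial derivative of $f_3$ with respect to the argument occupied by $x_j$ in $f_3(x,x_1,x_2)$; similarly $f_{2,x_j}$ refers to $f_2(x,x_3,x_1)$ and $f_{1,x_j}$ to $f_1(x,x_2,x_3)$. *)

theory Defs
  imports "HOL-Analysis.Analysis"
begin

type_synonym quad = "real \<Rightarrow> real \<Rightarrow> real \<Rightarrow> real \<Rightarrow> real \<Rightarrow> real \<Rightarrow> real"
  (* Q x u v y alpha beta *)

definition affine_fun :: "(real \<Rightarrow> real) \<Rightarrow> bool" where
  "affine_fun h \<longleftrightarrow> (\<forall>t. h t = h 0 + t * (h 1 - h 0))"

definition multiaffine :: "quad \<Rightarrow> bool" where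
  "multiaffine Q \<longleftrightarrow> (\<forall>x u v y a b.
      affine_fun (\<lambda>t. Q t u v y a b) \<and> affine_fun (\<lambda>t. Q x t v y a b) \<and>
      affine_fun (\<lambda>t. Q x u t y a b) \<and> affine_fun (\<lambda>t. Q x u v t a b))"

definition gfun :: "quad \<Rightarrow> real \<Rightarrow> real \<Rightarrow> real \<Rightarrow> real \<Rightarrow> real \<Rightarrow> real \<Rightarrow> real" where
  "gfun Q x u v y a b =
     Q x u v y a b * deriv (\<lambda>v'. deriv (\<lambda>y'. Q x u v' y' a b) y) v
     - deriv (\<lambda>y'. Q x u v y' a b) y * deriv (\<lambda>v'. Q x u v' y a b) v"

definition hfun :: "quad \<Rightarrow> real \<Rightarrow> real \<Rightarrow> real \<Rightarrow> real \<Rightarrow> real \<Rightarrow> real \<Rightarrow> real" where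
  "hfun Q x u v y a b =
     Q x u v y a b * deriv (\<lambda>u'. deriv (\<lambda>y'. Q x u' v y' a b) y) u
     - deriv (\<lambda>y'. Q x u v y' a b) y * deriv (\<lambda>u'. Q x u' v y a b) u"

text \<open>g(x,u;a,b), evaluated at the representative point v = y = 0
  (the statement also asserts independence of v, y).\<close>
definition g :: "quad \<Rightarrow> real \<Rightarrow> real \<Rightarrow> real \<Rightarrow> real \<Rightarrow> real" where
  "g Q x u a b = gfun Q x u 0 0 a b"

definition sol :: "quad \<Rightarrow> real \<Rightarrow> real \<Rightarrow> real \<Rightarrow> real \<Rightarrow> real \<Rightarrow> real" where
  "sol Q a b x u v = (THE y. Q x u v y a b = 0)"

end

theory Submission
  imports Defs
begin

text \<open>Fixing all but two of the arguments of Q leaves a biaffine function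
  F t y = p + q t + r y + s t y, for which F F_ty - F_t F_y = p s - q r is constant
  and the root y(t) = -(p + q t)/(r + s t) of F t y = 0 has derivative
  (p s - q r)/F_y^2. Hence each partial derivative of f1, f2, f3 is a value of g
  divided by the square of the corresponding Q_y, the symmetry with sign \<epsilon>
  identifying which value. The squared denominators on both sides of the first
  identity coincide, so it is equivalent to the identity of the g's. The symmetries
  change the constant p s - q r only by the factor \<epsilon>^2 = 1 or \<sigma>^2 = 1.\<close>

definition biaffine :: "(real \<Rightarrow> real \<Rightarrow> real) \<Rightarrow> bool" where
  "biaffine F \<longleftrightarrow> (\<forall>t. affine_fun (F t)) \<and> (\<forall>y. affine_fun (\<lambda>t. F t y))"

text \<open>For F t y = p + q t + r y + s t y this is p s - q r.\<close>
definition biaffine_discriminant :: "(real \<Rightarrow> real \<Rightarrow> real) \<Rightarrow> real" where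
  "biaffine_discriminant F =
     F 0 0 * (F 1 1 - F 1 0 - F 0 1 + F 0 0) - (F 1 0 - F 0 0) * (F 0 1 - F 0 0)"

lemma biaffine_expand:
  assumes "biaffine F"
  shows "F t y = F 0 0 + (F 1 0 - F 0 0) * t + (F 0 1 - F 0 0) * y
                 + (F 1 1 - F 1 0 - F 0 1 + F 0 0) * t * y"
proof -
  have affine_y: "affine_fun (F t)" and affine_t: "\<And>y. affine_fun (\<lambda>t. F t y)"
    using assms unfolding biaffine_def by blast+
  have "F t y = F t 0 + y * (F t 1 - F t 0)"
    using affine_y unfolding affine_fun_def by blast
  moreover have "F t 0 = F 0 0 + t * (F 1 0 - F 0 0)" and "F t 1 = F 0 1 + t * (F 1 1 - F 0 1)"
    using affine_t[of 0] affine_t[of 1] unfolding affine_fun_def by blast+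
  ultimately show ?thesis by (simp add: algebra_simps)
qed

lemma biaffine_discriminant_scale:
  "biaffine_discriminant (\<lambda>t y. c * F t y) = c\<^sup>2 * biaffine_discriminant F"
  unfolding biaffine_discriminant_def by (simp add: algebra_simps power2_eq_square)

lemma biaffine_discriminant_swap:
  "biaffine_discriminant (\<lambda>t y. F y t) = biaffine_discriminant F"
  unfolding biaffine_discriminant_def by (simp add: algebra_simps)

lemma biaffine_deriv_combination_eq_discriminant:
  assumes "biaffine F"
  shows "F t y * deriv (\<lambda>t'. deriv (\<lambda>y'. F t' y') y) t
           - deriv (\<lambda>y'. F t y') y * deriv (\<lambda>t'. F t' y) t
         = biaffine_discriminant F"
proof -
  obtain p q r s where F: "\<And>t y. F t y = p + q * t + r * y + s * t * y"
    and disc: "biaffine_discriminant F = p * s - q * r"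
    using biaffine_expand[OF assms] unfolding biaffine_discriminant_def by blast
  have dy: "deriv (\<lambda>y'. F t' y') y = r + s * t'" for t'
    unfolding F by (rule DERIV_imp_deriv) (auto intro!: derivative_eq_intros)
  have dty: "deriv (\<lambda>t'. r + s * t') t = s"
    by (rule DERIV_imp_deriv) (auto intro!: derivative_eq_intros)
  have dt: "deriv (\<lambda>t'. F t' y) t = q + s * y"
    unfolding F by (rule DERIV_imp_deriv) (auto intro!: derivative_eq_intros)
  show ?thesis
    unfolding dy dty dt disc by (subst F) (simp add: algebra_simps)
qed

lemma affine_fun_ex1_root_iff:
  assumes "affine_fun h"
  shows "(\<exists>!y. h y = 0) \<longleftrightarrow> h 1 \<noteq> h 0"
proof -
  have h: "h y = h 0 + y * (h 1 - h 0)" for y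
    using assms unfolding affine_fun_def by blast
  show ?thesis
  proof
    assume "\<exists>!y. h y = 0"
    then show "h 1 \<noteq> h 0"
      by (metis h add_cancel_left_left diff_self mult_zero_right zero_neq_one)
  next
    assume "h 1 \<noteq> h 0"
    then have "h y = 0 \<longleftrightarrow> y = - h 0 / (h 1 - h 0)" for y
      using h[of y] by (auto simp: field_simps)
    then show "\<exists>!y. h y = 0" by simp
  qed
qed

lemma deriv_biaffine_root:
  assumes "biaffine F" and "F t\<^sub>0 1 \<noteq> F t\<^sub>0 0"
  shows "deriv (\<lambda>t. THE y. F t y = 0) t\<^sub>0 = biaffine_discriminant F / (F t\<^sub>0 1 - F t\<^sub>0 0)\<^sup>2"
proof -
  obtain p q r s where F: "\<And>t y. F t y = p + q * t + r * y + s * t * y"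
    and disc: "biaffine_discriminant F = p * s - q * r"
    using biaffine_expand[OF assms(1)] unfolding biaffine_discriminant_def by blast
  let ?S = "{t. r + s * t \<noteq> 0}"
  have "open ?S"
    by (rule open_Collect_neq) (auto intro!: continuous_intros)
  have t0: "t\<^sub>0 \<in> ?S" and den: "F t\<^sub>0 1 - F t\<^sub>0 0 = r + s * t\<^sub>0"
    using assms(2) unfolding F by auto
  have root: "-(p + q * t) / (r + s * t) = (THE y. F t y = 0)" if "t \<in> ?S" for t
  proof (rule the_equality[symmetric])
    show "F t (-(p + q * t) / (r + s * t)) = 0"
      using that unfolding F by (simp add: field_simps)
    show "y = -(p + q * t) / (r + s * t)" if "F t y = 0" for y
      using that \<open>t \<in> ?S\<close> unfolding F by (simp add: field_simps)
  qed
  have "((\<lambda>t. -(p + q * t) / (r + s * t)) has_field_derivative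
          (p * s - q * r) / (r + s * t\<^sub>0)\<^sup>2) (at t\<^sub>0)"
    using t0 by (auto intro!: derivative_eq_intros simp: field_simps power2_eq_square)
  then have "((\<lambda>t. THE y. F t y = 0) has_field_derivative
          (p * s - q * r) / (r + s * t\<^sub>0)\<^sup>2) (at t\<^sub>0)"
    by (rule has_field_derivative_transform_within_open[OF _ \<open>open ?S\<close> t0 root])
  then show ?thesis
    unfolding disc den by (rule DERIV_imp_deriv)
qed

lemma multiaffine_biaffine_vy: "multiaffine Q \<Longrightarrow> biaffine (\<lambda>v y. Q x u v y a b)"
  and multiaffine_biaffine_uy: "multiaffine Q \<Longrightarrow> biaffine (\<lambda>u y. Q x u v y a b)"
  unfolding multiaffine_def biaffine_def by blast+

lemma gfun_eq_discriminant:
  "multiaffine Q \<Longrightarrow> gfun Q x u v y a b = biaffine_discriminant (\<lambda>v y. Q x u v y a b)"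
  unfolding gfun_def
  by (rule biaffine_deriv_combination_eq_discriminant[OF multiaffine_biaffine_vy])

lemma hfun_eq_discriminant:
  "multiaffine Q \<Longrightarrow> hfun Q x u v y a b = biaffine_discriminant (\<lambda>u y. Q x u v y a b)"
  unfolding hfun_def
  by (rule biaffine_deriv_combination_eq_discriminant[OF multiaffine_biaffine_uy])

lemma g_eq_discriminant:
  "multiaffine Q \<Longrightarrow> g Q x u a b = biaffine_discriminant (\<lambda>v y. Q x u v y a b)"
  unfolding g_def by (rule gfun_eq_discriminant)

lemma g_swap_params_eq_hfun:
  assumes "multiaffine Q" and "\<epsilon> \<in> {1, -1}"
    and "\<And>x u v y a b. Q x u v y a b = \<epsilon> * Q x v u y b a"
  shows "g Q x v b a = hfun Q x u v y a b"
proof -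
  have "g Q x v b a = biaffine_discriminant (\<lambda>u y. \<epsilon> * Q x u v y a b)"
    unfolding g_eq_discriminant[OF assms(1)] by (subst assms(3)) simp
  also have "\<dots> = \<epsilon>\<^sup>2 * biaffine_discriminant (\<lambda>u y. Q x u v y a b)"
    by (rule biaffine_discriminant_scale)
  also have "\<dots> = hfun Q x u v y a b"
    using assms(2) by (auto simp: hfun_eq_discriminant[OF assms(1)])
  finally show ?thesis .
qed

lemma g_commute:
  assumes "multiaffine Q" and "\<sigma> \<in> {1, -1}"
    and "\<And>x u v y a b. Q x u v y a b = \<sigma> * Q u x y v a b"
  shows "g Q x u a b = g Q u x a b"
proof -
  have "g Q u x a b = biaffine_discriminant (\<lambda>y v. \<sigma> * Q x u v y a b)"
    unfolding g_eq_discriminant[OF assms(1)] by (subst assms(3)) simp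
  also have "\<dots> = \<sigma>\<^sup>2 * biaffine_discriminant (\<lambda>y v. Q x u v y a b)"
    by (rule biaffine_discriminant_scale)
  also have "\<dots> = biaffine_discriminant (\<lambda>v y. Q x u v y a b)"
    using assms(2) biaffine_discriminant_swap[of "\<lambda>v y. Q x u v y a b"] by auto
  finally show ?thesis
    unfolding g_eq_discriminant[OF assms(1)] ..
qed

lemma multiaffine_ex1_sol_iff:
  "multiaffine Q \<Longrightarrow> (\<exists>!y. Q x u v y a b = 0) \<longleftrightarrow> Q x u v 1 a b \<noteq> Q x u v 0 a b"
  unfolding multiaffine_def by (rule affine_fun_ex1_root_iff) blast

lemma deriv_sol_in_v:
  assumes "multiaffine Q" and "Q x u v 1 a b \<noteq> Q x u v 0 a b"
  shows "deriv (\<lambda>t. sol Q a b x u t) v = g Q x u a b / (Q x u v 1 a b - Q x u v 0 a b)\<^sup>2"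
  unfolding sol_def g_eq_discriminant[OF assms(1)]
  by (rule deriv_biaffine_root[OF multiaffine_biaffine_vy[OF assms(1)] assms(2)])

lemma deriv_sol_in_u:
  assumes "multiaffine Q" and "\<epsilon> \<in> {1, -1}"
    and "\<And>x u v y a b. Q x u v y a b = \<epsilon> * Q x v u y b a"
    and "Q x u v 1 a b \<noteq> Q x u v 0 a b"
  shows "deriv (\<lambda>t. sol Q a b x t v) u = g Q x v b a / (Q x u v 1 a b - Q x u v 0 a b)\<^sup>2"
  unfolding sol_def g_swap_params_eq_hfun[OF assms(1-3), of x v b a u 0]
    hfun_eq_discriminant[OF assms(1)]
  by (rule deriv_biaffine_root[OF multiaffine_biaffine_uy[OF assms(1)] assms(4)])

lemma frac_triple_product_eq_neg_iff:
  fixes a1 a2 a3 b1 b2 b3 d1 d2 d3 :: "'a::field"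
  assumes "d1 \<noteq> 0" "d2 \<noteq> 0" "d3 \<noteq> 0"
  shows "a1 / d1\<^sup>2 * (a2 / d2\<^sup>2) * (a3 / d3\<^sup>2) = - (b1 / d1\<^sup>2 * (b2 / d2\<^sup>2) * (b3 / d3\<^sup>2))
     \<longleftrightarrow> a1 * a2 * a3 = - (b1 * b2 * b3)"
  using assms by (simp add: field_simps)

lemma sol_deriv_identity_iff_g_identity:
  assumes "multiaffine Q" and "\<epsilon> \<in> {1, -1}"
    and "\<And>x u v y a b. Q x u v y a b = \<epsilon> * Q x v u y b a"
    and "\<exists>!y. Q x x2 x3 y \<alpha>2 \<alpha>3 = 0" "\<exists>!y. Q x x3 x1 y \<alpha>3 \<alpha>1 = 0"
      "\<exists>!y. Q x x1 x2 y \<alpha>1 \<alpha>2 = 0"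
  shows "deriv (\<lambda>t. sol Q \<alpha>1 \<alpha>2 x x1 t) x2 * deriv (\<lambda>t. sol Q \<alpha>3 \<alpha>1 x x3 t) x1
           * deriv (\<lambda>t. sol Q \<alpha>2 \<alpha>3 x x2 t) x3
         = - (deriv (\<lambda>t. sol Q \<alpha>1 \<alpha>2 x t x2) x1 * deriv (\<lambda>t. sol Q \<alpha>3 \<alpha>1 x t x1) x3
           * deriv (\<lambda>t. sol Q \<alpha>2 \<alpha>3 x t x3) x2)
     \<longleftrightarrow> g Q x x1 \<alpha>1 \<alpha>2 * g Q x x2 \<alpha>2 \<alpha>3 * g Q x x3 \<alpha>3 \<alpha>1
         = - (g Q x x1 \<alpha>1 \<alpha>3 * g Q x x2 \<alpha>2 \<alpha>1 * g Q x x3 \<alpha>3 \<alpha>2)"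
proof -
  note nz = assms(4-6)[unfolded multiaffine_ex1_sol_iff[OF assms(1)]]
  have "Q x x1 x2 1 \<alpha>1 \<alpha>2 - Q x x1 x2 0 \<alpha>1 \<alpha>2 \<noteq> 0"
    "Q x x3 x1 1 \<alpha>3 \<alpha>1 - Q x x3 x1 0 \<alpha>3 \<alpha>1 \<noteq> 0"
    "Q x x2 x3 1 \<alpha>2 \<alpha>3 - Q x x2 x3 0 \<alpha>2 \<alpha>3 \<noteq> 0"
    using nz by simp_all
  note frac_iff = frac_triple_product_eq_neg_iff[OF this]
  show ?thesis
    unfolding deriv_sol_in_v[OF assms(1) nz(1)] deriv_sol_in_v[OF assms(1) nz(2)]
      deriv_sol_in_v[OF assms(1) nz(3)] deriv_sol_in_u[OF assms(1-3) nz(1)]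
      deriv_sol_in_u[OF assms(1-3) nz(2)] deriv_sol_in_u[OF assms(1-3) nz(3)] frac_iff
    by (simp add: ac_simps)
qed

theorem proposition2:
  fixes Q :: quad and \<epsilon> \<sigma> :: real
  assumes maff: "multiaffine Q"
    and eps: "\<epsilon> \<in> {1, -1}" and sig: "\<sigma> \<in> {1, -1}"
    and sym1: "\<And>x u v y a b. Q x u v y a b = \<epsilon> * Q x v u y b a"
    and sym2: "\<And>x u v y a b. Q x u v y a b = \<sigma> * Q u x y v a b"
  shows "(\<forall>x u v y v' y' a b. gfun Q x u v y a b = gfun Q x u v' y' a b)
    \<and> (\<forall>x u v y a b. g Q x v b a = hfun Q x u v y a b)
    \<and> (\<forall>x u a b. g Q x u a b = g Q u x a b)
    \<and> (\<forall>\<alpha>1 \<alpha>2 \<alpha>3.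
         let f1 = (\<lambda>x x2 x3. sol Q \<alpha>2 \<alpha>3 x x2 x3);
             f2 = (\<lambda>x x3 x1. sol Q \<alpha>3 \<alpha>1 x x3 x1);
             f3 = (\<lambda>x x1 x2. sol Q \<alpha>1 \<alpha>2 x x1 x2);
             D = (\<lambda>x x1 x2 x3. (\<exists>!y. Q x x2 x3 y \<alpha>2 \<alpha>3 = 0)
                    \<and> (\<exists>!y. Q x x3 x1 y \<alpha>3 \<alpha>1 = 0)
                    \<and> (\<exists>!y. Q x x1 x2 y \<alpha>1 \<alpha>2 = 0))
         in (\<forall>x x1 x2 x3. D x x1 x2 x3 \<longrightarrow>
               deriv (\<lambda>t. f3 x x1 t) x2 * deriv (\<lambda>t. f2 x x3 t) x1 * deriv (\<lambda>t. f1 x x2 t) x3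
               = - (deriv (\<lambda>t. f3 x t x2) x1 * deriv (\<lambda>t. f2 x t x1) x3 * deriv (\<lambda>t. f1 x t x3) x2))
            \<longleftrightarrow>
            (\<forall>x x1 x2 x3. D x x1 x2 x3 \<longrightarrow>
               g Q x x1 \<alpha>1 \<alpha>2 * g Q x x2 \<alpha>2 \<alpha>3 * g Q x x3 \<alpha>3 \<alpha>1
               = - (g Q x x1 \<alpha>1 \<alpha>3 * g Q x x2 \<alpha>2 \<alpha>1 * g Q x x3 \<alpha>3 \<alpha>2)))"
  unfolding Let_def
proof (intro conjI allI iff_allI imp_cong refl)
  show "gfun Q x u v y a b = gfun Q x u v' y' a b" for x u v y v' y' a b
    by (simp add: gfun_eq_discriminant[OF maff])
  show "g Q x v b a = hfun Q x u v y a b" for x u v y a b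
    by (rule g_swap_params_eq_hfun[OF maff eps sym1])
  show "g Q x u a b = g Q u x a b" for x u a b
    by (rule g_commute[OF maff sig sym2])
qed (rule sol_deriv_identity_iff_g_identity[OF maff eps sym1]; blast)

end
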